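(* In the setting described in the context, under $H_0$ and hypotheses (i)–(v) listed there, for every $\epsilon>0$, $$\sup_{\mathbf C}P\Big(\Big|\frac{S_V(\mathbf C)}{\sqrt n\,\mathrm{sd}}\Big|\ge\epsilon\Big)\to0\quad(n\to\infty).$$
   Context: Observations $(Y_i,\mathbf X_i,\mathbf Z_i)$, $i=1,\dots,n$, are i.i.d. with $\mathbf X\in\mathbb R^r,\mathbf Z\in\mathbb R^s$, $Y=m(\mathbf X,\mathbf Z)+\sigma(\mathbf X,\mathbf Z)\epsilon$, $\epsilon$ with mean zero and constant variance independent of $(\mathbf X,\mathbf Z)$; $H_0:m(\mathbf x,\mathbf z)=m_1(\mathbf x)$. Let $\xi_i=Y_i-m_1(\mathbf X_i)$. Hypotheses: (i) the densities of $\mathbf X$ and $\mathbf Z$ are bounded away from zero; (ii) the $(q+1)$-th derivatives of $m_1$ are uniformly continuous and bounded; (iii) $\sigma^2(\cdot,\mathbf z):=E(\xi^2\mid\mathbf Z^T\mathbf C)$ is Lipschitz continuous; (iv) $\sup\sigma^2<\infty$ and $E\epsilon^4<\infty$; (v) a bandwidth matrix $H_n^{1/2}$ has eigenvalues $\lambda_1,\dots,\lambda_r\to0$ at the same rate with $n\lambda_i^{4(q+1)}\to0$, $n\lambda_i^{2r}/(\log n)^2\to\infty$. $\tau=\int\big[\int\sigma^2(\mathbf x,\mathbf z)f_{\mathbf X\mid\mathbf Z^T\mathbf C=\mathbf z^T\mathbf C}(\mathbf x)d\mathbf x\big]^2 f_{\mathbf Z^T\mathbf C}(\mathbf z^T\mathbf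 C)\,d(\mathbf z^T\mathbf C)$ and $\mathrm{sd}=\sqrt{\frac{2p(2p-1)}{3(p-1)}\tau^2}$. For $\mathbf C\in\mathbb R^s$, with data ordered by $P_i=\mathbf Z_i^T\mathbf C$, let $\hat F_P$ be the empirical distribution function of the $P_i$ and $W_i(\mathbf C)=\{j:|\hat F_P(P_j)-\hat F_P(P_i)|\le(p-1)/(2n)\}$, $p\ge3$ a fixed odd integer. Define $\gamma_i(\mathbf C)=\frac{1}{p-1}\sum_{j_1\ne j_2}\xi_{j_1}\xi_{j_2}I(j_1,j_2\in W_i(\mathbf C))$. Let $b_n\sim n^{2/3}$ and $r_n\sim n/b_n\sim n^{1/3}$, and for $i=1,\dots,r_n$ set $U_i(\mathbf C)=\sum_{k=1}^{b_n}\gamma_{(i-1)(b_n+p)+k}(\mathbf C)$, $V_i(\mathbf C)=\sum_{k=b_n+1}^{b_n+p}\gamma_{(i-1)(b_n+p)+k}(\mathbf C)$, $S_U(\mathbf C)=\sum_{i=1}^{r_n}U_i(\mathbf C)$, $S_V(\mathbf C)=\sum_{i=1}^{r_n}V_i(\mathbf C)$. *)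

theory Defs
  imports "HOL-Probability.Probability" "HOL-Library.Landau_Symbols"
begin

definition partial_dir :: "'r::finite \<Rightarrow> (real^'r \<Rightarrow> real) \<Rightarrow> real^'r \<Rightarrow> real" where
  "partial_dir i f x = deriv (\<lambda>t. f (x + t *\<^sub>R axis i 1)) 0"

fun iter_partial :: "'r::finite list \<Rightarrow> (real^'r \<Rightarrow> real) \<Rightarrow> real^'r \<Rightarrow> real" where
  "iter_partial [] f = f"
| "iter_partial (i # is) f = partial_dir i (iter_partial is f)"

definition derivs_bdd_ucont :: "nat \<Rightarrow> (real^'r::finite \<Rightarrow> real) \<Rightarrow> bool" where
  "derivs_bdd_ucont k f \<longleftrightarrow>
     (\<forall>is i x. length is < k \<longrightarrow>
        (\<lambda>t. iter_partial is f (x + t *\<^sub>R axis i 1)) differentiable (at 0)) \<and>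
     (\<forall>is. length is = k \<longrightarrow>
        bounded (range (iter_partial is f)) \<and> uniformly_continuous_on UNIV (iter_partial is f))"

definition Fhat :: "nat \<Rightarrow> (nat \<Rightarrow> real) \<Rightarrow> real \<Rightarrow> real" where
  "Fhat n P t = real (card {k. k < n \<and> P k \<le> t}) / real n"

definition Wnb :: "nat \<Rightarrow> nat \<Rightarrow> (nat \<Rightarrow> real) \<Rightarrow> nat \<Rightarrow> nat set" where
  "Wnb p n P i = {j. j < n \<and> \<bar>Fhat n P (P j) - Fhat n P (P i)\<bar> \<le> (real p - 1) / (2 * real n)}"

definition gam :: "nat \<Rightarrow> nat \<Rightarrow> (nat \<Rightarrow> real) \<Rightarrow> (nat \<Rightarrow> real) \<Rightarrow> nat \<Rightarrow> real" where
  "gam p n P xi i = 1 / (real p - 1) *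
     (\<Sum>j1\<in>Wnb p n P i. \<Sum>j2\<in>Wnb p n P i - {j1}. xi j1 * xi j2)"

text \<open>Position (1..n) of observation i when the data are ordered by P (ties broken by index).\<close>
definition ord_pos :: "nat \<Rightarrow> (nat \<Rightarrow> real) \<Rightarrow> nat \<Rightarrow> nat" where
  "ord_pos n P i = card {j. j < n \<and> (P j < P i \<or> (P j = P i \<and> j \<le> i))}"

text \<open>gamma at order position k (0 if k is not a position 1..n).\<close>
definition gam_ord :: "nat \<Rightarrow> nat \<Rightarrow> (nat \<Rightarrow> real) \<Rightarrow> (nat \<Rightarrow> real) \<Rightarrow> nat \<Rightarrow> real" where
  "gam_ord p n P xi k = (\<Sum>l\<in>{l. l < n \<and> ord_pos n P l = k}. gam p n P xi l)"

text \<open>S_V(C) with block length b = b_n and number of blocks r = r_n.\<close>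
definition S_V :: "nat \<Rightarrow> nat \<Rightarrow> nat \<Rightarrow> nat \<Rightarrow> (nat \<Rightarrow> real) \<Rightarrow> (nat \<Rightarrow> real) \<Rightarrow> real" where
  "S_V p n b r P xi = (\<Sum>i\<in>{1..r}. \<Sum>k\<in>{b+1..b+p}. gam_ord p n P xi ((i - 1) * (b + p) + k))"

definition tau :: "'a measure \<Rightarrow> ('a \<Rightarrow> real^'s::finite) \<Rightarrow> ('a \<Rightarrow> real) \<Rightarrow> real^'s \<Rightarrow> real" where
  "tau M Z xi C = (\<integral>\<omega>. (real_cond_exp M (vimage_algebra (space M) (\<lambda>\<omega>. Z \<omega> \<bullet> C) borel)
                          (\<lambda>\<omega>. (xi \<omega>)\<^sup>2) \<omega>)\<^sup>2 \<partial>M)"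

definition sd :: "nat \<Rightarrow> real \<Rightarrow> real" where
  "sd p t = sqrt (2 * real p * (2 * real p - 1) / (3 * (real p - 1)) * t\<^sup>2)"

end

theory Submission
  imports Defs "HOL-Real_Asymp.Real_Asymp"
begin

text \<open>
  Almost surely the projections \<open>Z\<^sub>k \<bullet> C\<close> are pairwise distinct, since \<open>Z\<close> has a density. Then every
  window \<open>W\<^sub>i(C)\<close> holds at most \<open>p\<close> observations, so \<open>|\<gamma>\<^sub>i| \<le> 2 \<Sum>\<^bsub>j\<in>W\<^sub>i\<^esub> \<xi>\<^sub>j\<^sup>2\<close> and
  \<open>|S_V(C)| \<le> 2 sup \<sigma>\<^sup>2\<close> times the \<open>\<epsilon>\<^sup>2\<close>-mass in the windows of the \<open>r\<^sub>n p\<close> positions of the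
  \<open>V\<close>-blocks. The ranks depend on the \<open>Z\<close>'s only and \<open>\<epsilon>\<^sub>j\<close> is independent of them, so this mass
  has expectation at most \<open>r\<^sub>n p\<^sup>2 E \<epsilon>\<^sup>2\<close>. By Jensen \<open>\<tau> \<ge> (E \<xi>\<^sup>2)\<^sup>2\<close>, and Markov's inequality
  bounds the probability by a constant times \<open>r\<^sub>n / \<surd>n \<sim> n\<^sup>-\<^sup>1\<^sup>/\<^sup>6\<close>, uniformly in \<open>C\<close>.
  (If \<open>E \<xi>\<^sup>2 = 0\<close>, then \<open>S_V = 0\<close> almost surely.) The hypotheses on \<open>m\<^sub>1\<close>, the bandwidths,
  the density of \<open>X\<close> and the Lipschitz condition are not needed.
\<close>

section \<open>Ranks and windows\<close>

definition sample_rank :: "nat \<Rightarrow> (nat \<Rightarrow> 'a::linorder) \<Rightarrow> nat \<Rightarrow> nat" where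
  "sample_rank n P j = card {k. k < n \<and> P k \<le> P j}"

lemma sample_rank_less:
  assumes "P j < P j'" and "j' < n"
  shows "sample_rank n P j < sample_rank n P j'"
proof -
  have "{k. k < n \<and> P k \<le> P j} \<subseteq> {k. k < n \<and> P k \<le> P j'}"
    using assms(1) by auto
  moreover have "j' \<in> {k. k < n \<and> P k \<le> P j'} - {k. k < n \<and> P k \<le> P j}"
    using assms by simp
  ultimately show ?thesis
    unfolding sample_rank_def by (intro psubset_card_mono) auto
qed

lemma inj_on_sample_rank:
  assumes "inj_on P {..<n}"
  shows "inj_on (sample_rank n P) {..<n}"
proof (rule inj_onI, rule ccontr)
  fix j j' assume j: "j \<in> {..<n}" "j' \<in> {..<n}" and eq: "sample_rank n P j = sample_rank n P j'" and "j \<noteq> j'"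
  then have "P j \<noteq> P j'" using assms by (auto dest: inj_onD)
  then show False
    using sample_rank_less[of P j j' n] sample_rank_less[of P j' j n] j eq
    by (auto simp: linorder_neq_iff)
qed

lemma ord_pos_eq_sample_rank:
  assumes "inj_on P {..<n}" and "l < n"
  shows "ord_pos n P l = sample_rank n P l"
proof -
  have "{j. j < n \<and> (P j < P l \<or> P j = P l \<and> j \<le> l)} = {k. k < n \<and> P k \<le> P l}"
    using assms by (auto dest: inj_onD)
  then show ?thesis unfolding ord_pos_def sample_rank_def by simp
qed

lemma Fhat_at_sample: "Fhat n P (P j) = real (sample_rank n P j) / real n"
  unfolding Fhat_def sample_rank_def ..

lemma real_card_filter_eq_sum:
  "finite A \<Longrightarrow> real (card {x\<in>A. Q x}) = (\<Sum>x\<in>A. if Q x then 1 else 0)"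
  by (simp add: sum.If_cases Int_def)

definition rank_window :: "nat \<Rightarrow> nat \<Rightarrow> (nat \<Rightarrow> 'a::linorder) \<Rightarrow> nat \<Rightarrow> nat set" where
  "rank_window p n P c = {j. j < n \<and> \<bar>real (sample_rank n P j) - real c\<bar> \<le> (real p - 1) / 2}"

lemma Wnb_eq_rank_window: "Wnb p n P l = rank_window p n P (sample_rank n P l)"
proof (cases "n = 0")
  case False
  then have "\<bar>a / real n - a' / real n\<bar> \<le> (real p - 1) / (2 * real n) \<longleftrightarrow>
             \<bar>a - a'\<bar> \<le> (real p - 1) / 2" for a a'
  proof -
    have "\<bar>a / real n - a' / real n\<bar> = \<bar>a - a'\<bar> / real n"
      by (simp add: diff_divide_distrib[symmetric])
    moreover have "(real p - 1) / (2 * real n) = (real p - 1) / 2 / real n" by simp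
    ultimately show ?thesis using False by (simp only: divide_le_cancel) simp
  qed
  then show ?thesis unfolding Wnb_def rank_window_def Fhat_at_sample by simp
qed (simp add: Wnb_def rank_window_def)

lemma card_rank_window_le:
  assumes inj: "inj_on P {..<n}" and "p \<ge> 1"
  shows "card (rank_window p n P c) \<le> p"
proof -
  let ?h = "(p - 1) div 2"
  have "sample_rank n P ` rank_window p n P c \<subseteq> {c - ?h .. c + ?h}"
  proof
    fix m assume "m \<in> sample_rank n P ` rank_window p n P c"
    then have "2 * \<bar>real m - real c\<bar> \<le> real (p - 1)"
      using \<open>p \<ge> 1\<close> by (auto simp: rank_window_def of_nat_diff)
    then have "real_of_int (2 * \<bar>int m - int c\<bar>) \<le> real_of_int (int (p - 1))" by simp
    then have "(2 * \<bar>int m - int c\<bar>) div 2 \<le> int (p - 1) div 2"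
      by (simp only: of_int_le_iff zdiv_mono1)
    then have "\<bar>int m - int c\<bar> \<le> int ?h" by (simp add: zdiv_int)
    then have "c \<le> m + ?h" "m \<le> c + ?h" by linarith+
    then show "m \<in> {c - ?h .. c + ?h}" by (simp add: le_diff_conv)
  qed
  moreover have "inj_on (sample_rank n P) (rank_window p n P c)"
    using inj_on_sample_rank[OF inj] by (rule inj_on_subset) (auto simp: rank_window_def)
  ultimately have "card (rank_window p n P c) \<le> card {c - ?h .. c + ?h}"
    by (metis card_image card_mono finite_atLeastAtMost)
  also have "\<dots> \<le> p" using \<open>p \<ge> 1\<close> by simp
  finally show ?thesis .
qed

section \<open>A pathwise bound for \<open>S_V\<close>\<close>

lemma abs_sum_offdiag_products_le:
  fixes a :: "nat \<Rightarrow> real"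
  assumes "finite W"
  shows "\<bar>\<Sum>j1\<in>W. \<Sum>j2\<in>W - {j1}. a j1 * a j2\<bar> \<le> real (card W) * (\<Sum>j\<in>W. (a j)\<^sup>2)"
proof -
  have "\<bar>\<Sum>j1\<in>W. \<Sum>j2\<in>W - {j1}. a j1 * a j2\<bar> \<le> (\<Sum>j1\<in>W. \<Sum>j2\<in>W. \<bar>a j1 * a j2\<bar>)"
    using assms by (intro order.trans[OF sum_abs] sum_mono order.trans[OF sum_abs] sum_mono2) auto
  also have "\<dots> \<le> (\<Sum>j1\<in>W. \<Sum>j2\<in>W. ((a j1)\<^sup>2 + (a j2)\<^sup>2) / 2)"
  proof (intro sum_mono)
    fix j1 j2
    have "0 \<le> (\<bar>a j1\<bar> - \<bar>a j2\<bar>)\<^sup>2" by simp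
    then show "\<bar>a j1 * a j2\<bar> \<le> ((a j1)\<^sup>2 + (a j2)\<^sup>2) / 2"
      by (simp add: power2_diff abs_mult)
  qed
  also have "\<dots> = real (card W) * (\<Sum>j\<in>W. (a j)\<^sup>2)"
    by (simp add: add_divide_distrib sum.distrib sum_divide_distrib[symmetric]
                  sum_distrib_left[symmetric] sum_distrib_right[symmetric])
  finally show ?thesis .
qed

lemma abs_gam_le:
  assumes "card (Wnb p n P l) \<le> p" and "p \<ge> 2"
  shows "\<bar>gam p n P xi l\<bar> \<le> 2 * (\<Sum>j\<in>Wnb p n P l. (xi j)\<^sup>2)"
proof -
  let ?W = "Wnb p n P l" and ?S = "\<Sum>j\<in>Wnb p n P l. (xi j)\<^sup>2"
  have "finite ?W" unfolding Wnb_def by simp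
  then have "\<bar>\<Sum>j1\<in>?W. \<Sum>j2\<in>?W - {j1}. xi j1 * xi j2\<bar> \<le> real p * ?S"
    using abs_sum_offdiag_products_le[of ?W xi] assms(1)
    by (meson mult_right_mono of_nat_le_iff order.trans sum_nonneg zero_le_power2)
  also have "\<dots> \<le> 2 * (real p - 1) * ?S"
    using \<open>p \<ge> 2\<close> by (intro mult_right_mono sum_nonneg) auto
  finally show ?thesis
    using \<open>p \<ge> 2\<close> unfolding gam_def by (simp add: abs_mult field_simps)
qed

lemma abs_gam_ord_le:
  assumes inj: "inj_on P {..<n}" and "p \<ge> 2"
  shows "\<bar>gam_ord p n P xi c\<bar> \<le> 2 * (\<Sum>j\<in>rank_window p n P c. (xi j)\<^sup>2)"
proof (cases "\<exists>l<n. ord_pos n P l = c")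
  case True
  then obtain l where l: "l < n" "sample_rank n P l = c"
    using ord_pos_eq_sample_rank[OF inj] by auto
  have "{l'. l' < n \<and> ord_pos n P l' = c} = {l}"
    using l inj_onD[OF inj_on_sample_rank[OF inj]] ord_pos_eq_sample_rank[OF inj] by auto
  then have "gam_ord p n P xi c = gam p n P xi l" unfolding gam_ord_def by simp
  moreover have "Wnb p n P l = rank_window p n P c"
    using Wnb_eq_rank_window l(2) by simp
  moreover have "card (rank_window p n P c) \<le> p"
    using card_rank_window_le[OF inj] \<open>p \<ge> 2\<close> by simp
  ultimately show ?thesis using abs_gam_le[of p n P l xi] \<open>p \<ge> 2\<close> by simp
next
  case False
  then have no_obs: "{l. l < n \<and> ord_pos n P l = c} = {}" by auto
  show ?thesis unfolding gam_ord_def no_obs by (simp add: sum_nonneg)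
qed

definition window_energy ::
    "nat \<Rightarrow> nat \<Rightarrow> nat \<Rightarrow> nat \<Rightarrow> (nat \<Rightarrow> 'a::linorder) \<Rightarrow> (nat \<Rightarrow> real) \<Rightarrow> real" where
  "window_energy p n b r P w =
     (\<Sum>i\<in>{1..r}. \<Sum>k\<in>{b+1..b+p}. \<Sum>j\<in>rank_window p n P ((i - 1) * (b + p) + k). w j)"

lemma abs_S_V_le_window_energy:
  assumes "inj_on P {..<n}" and "p \<ge> 2"
  shows "\<bar>S_V p n b r P xi\<bar> \<le> 2 * window_energy p n b r P (\<lambda>j. (xi j)\<^sup>2)"
proof -
  have "\<bar>S_V p n b r P xi\<bar>
      \<le> (\<Sum>i\<in>{1..r}. \<Sum>k\<in>{b+1..b+p}. \<bar>gam_ord p n P xi ((i - 1) * (b + p) + k)\<bar>)"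
    unfolding S_V_def by (intro order.trans[OF sum_abs] sum_mono sum_abs)
  also have "\<dots> \<le> (\<Sum>i\<in>{1..r}. \<Sum>k\<in>{b+1..b+p}.
                    2 * (\<Sum>j\<in>rank_window p n P ((i - 1) * (b + p) + k). (xi j)\<^sup>2))"
    by (intro sum_mono abs_gam_ord_le assms)
  also have "\<dots> = 2 * window_energy p n b r P (\<lambda>j. (xi j)\<^sup>2)"
    by (simp add: window_energy_def sum_distrib_left)
  finally show ?thesis .
qed

lemma window_energy_mono:
  assumes "\<And>j. w j \<le> w' j"
  shows "window_energy p n b r P w \<le> window_energy p n b r P w'"
  unfolding window_energy_def by (intro sum_mono assms)

lemma window_energy_cmult: "window_energy p n b r P (\<lambda>j. c * w j) = c * window_energy p n b r P w"
  unfolding window_energy_def by (simp add: sum_distrib_left)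

lemma window_energy_nonneg: "(\<And>j. 0 \<le> w j) \<Longrightarrow> 0 \<le> window_energy p n b r P w"
  unfolding window_energy_def by (intro sum_nonneg)

lemma window_energy_eq_sum_lessThan:
  "window_energy p n b r P w = (\<Sum>i\<in>{1..r}. \<Sum>k\<in>{b+1..b+p}. \<Sum>j<n.
      if j \<in> rank_window p n P ((i - 1) * (b + p) + k) then w j else 0)"
  unfolding window_energy_def
  by (intro sum.cong refl sum.mono_neutral_cong_left) (auto simp: rank_window_def)

lemma S_V_eq_0_if_noise_0:
  assumes "\<And>j. j < n \<Longrightarrow> xi j = 0"
  shows "S_V p n b r P xi = 0"
proof -
  have "gam p n P xi l = 0" for l
    unfolding gam_def using assms by (auto simp: Wnb_def intro!: sum.neutral)
  then show ?thesis unfolding S_V_def gam_ord_def by simp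
qed

lemma measurable_fst_borel[measurable]:
  "(fst :: 'a::second_countable_topology \<times> 'b::second_countable_topology \<Rightarrow> 'a) \<in> borel \<rightarrow>\<^sub>M borel"
  by (subst borel_prod[symmetric]) (rule measurable_fst)

lemma measurable_snd_borel[measurable]:
  "(snd :: 'a::second_countable_topology \<times> 'b::second_countable_topology \<Rightarrow> 'b) \<in> borel \<rightarrow>\<^sub>M borel"
  by (subst borel_prod[symmetric]) (rule measurable_snd)

lemma nn_integral_if_eq_emeasure:
  assumes [measurable]: "Measurable.pred M P"
  shows "(\<integral>\<^sup>+\<omega>. (if P \<omega> then 1 else 0) \<partial>M) = emeasure M {\<omega>\<in>space M. P \<omega>}"
proof -
  have "(\<integral>\<^sup>+\<omega>. (if P \<omega> then 1 else 0) \<partial>M) = (\<integral>\<^sup>+\<omega>. indicator {\<omega>\<in>space M. P \<omega>} \<omega> \<partial>M)"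
    by (intro nn_integral_cong) (simp add: indicator_def)
  then show ?thesis by simp
qed

lemma emeasure_inner_eq_const:
  fixes V :: "'a \<Rightarrow> 'b::euclidean_space"
  assumes dens: "distributed M lborel V f" and "C \<noteq> 0"
  shows "emeasure M {\<omega>\<in>space M. V \<omega> \<bullet> C = a} = 0"
proof -
  let ?H = "{v::'b. C \<bullet> v = a}"
  have H[measurable]: "?H \<in> sets lborel" by measurable
  have "negligible ?H" using \<open>C \<noteq> 0\<close> by (intro negligible_hyperplane) simp
  then have "?H \<in> null_sets lborel"
    using null_sets_completion_iff[OF H] by (simp add: negligible_iff_null_sets)
  have "{\<omega>\<in>space M. V \<omega> \<bullet> C = a} = V -` ?H \<inter> space M" by (auto simp: inner_commute)
  also have "emeasure M \<dots> = emeasure (distr M lborel V) ?H"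
    using dens by (subst emeasure_distr) (simp_all add: distributed_def measurable_lborel2)
  also have "\<dots> = emeasure (density lborel f) ?H"
    using dens by (simp add: distributed_def)
  also have "\<dots> = (\<integral>\<^sup>+v. f v * indicator ?H v \<partial>lborel)"
    using dens by (simp add: emeasure_density distributed_def)
  also have "\<dots> = 0" using \<open>?H \<in> null_sets lborel\<close> by (rule nn_integral_null_set)
  finally show ?thesis .
qed

lemma subalgebra_vimage_algebra:
  assumes "g \<in> M \<rightarrow>\<^sub>M N"
  shows "subalgebra M (vimage_algebra (space M) g N)"
  unfolding subalgebra_def using sets_image_in_sets[OF _ assms] by simp

text \<open>The hypothesis \<open>nonzero\<close> stands in for square integrability of the conditional expectation:
  non-integrable functions have Bochner integral \<open>0\<close>.\<close>
lemma (in prob_space) square_integral_le_integral_cond_exp_sq: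
  fixes f :: "'a \<Rightarrow> real"
  assumes "subalgebra M F" and "integrable M f"
    and nonzero: "(\<integral>\<omega>. (real_cond_exp M F f \<omega>)\<^sup>2 \<partial>M) \<noteq> 0"
  shows "(\<integral>\<omega>. f \<omega> \<partial>M)\<^sup>2 \<le> (\<integral>\<omega>. (real_cond_exp M F f \<omega>)\<^sup>2 \<partial>M)"
proof -
  interpret finite_measure_subalgebra M F
    by unfold_locales (rule assms(1))
  let ?c = "real_cond_exp M F f"
  have c_int: "integrable M ?c" and same_mean: "(\<integral>\<omega>. ?c \<omega> \<partial>M) = (\<integral>\<omega>. f \<omega> \<partial>M)"
    using real_cond_exp_int[OF assms(2)] by auto
  have c_sq: "integrable M (\<lambda>\<omega>. (?c \<omega>)\<^sup>2)"
    using nonzero not_integrable_integral_eq by blast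
  have "0 \<le> variance ?c" by (rule variance_positive)
  also have "variance ?c = (\<integral>\<omega>. (?c \<omega>)\<^sup>2 \<partial>M) - (\<integral>\<omega>. ?c \<omega> \<partial>M)\<^sup>2"
    by (rule variance_eq[OF c_int c_sq])
  finally show ?thesis using same_mean by simp
qed

lemma square_second_moment_le_tau:
  fixes V :: "'a \<Rightarrow> real^'s" and \<xi> :: "'a \<Rightarrow> real"
  assumes "prob_space M" and [measurable]: "V \<in> borel_measurable M"
    and "integrable M (\<lambda>\<omega>. (\<xi> \<omega>)\<^sup>2)" and "tau M V \<xi> C \<noteq> 0"
  shows "(\<integral>\<omega>. (\<xi> \<omega>)\<^sup>2 \<partial>M)\<^sup>2 \<le> tau M V \<xi> C"
  using assms unfolding tau_def
  by (intro prob_space.square_integral_le_integral_cond_exp_sq subalgebra_vimage_algebra) simp_all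

lemma tendsto_SUP_0_if_dominated:
  fixes f :: "nat \<Rightarrow> 'c \<Rightarrow> real"
  assumes "A \<noteq> {}" and nonneg: "\<And>n x. x \<in> A \<Longrightarrow> 0 \<le> f n x"
    and dominated: "\<And>n x. x \<in> A \<Longrightarrow> f n x \<le> g n" and "g \<longlonglongrightarrow> 0"
  shows "(\<lambda>n. SUP x\<in>A. f n x) \<longlonglongrightarrow> 0"
proof (rule tendsto_sandwich[OF _ _ tendsto_const \<open>g \<longlonglongrightarrow> 0\<close>])
  obtain x where "x \<in> A" using \<open>A \<noteq> {}\<close> by blast
  have "bdd_above (f n ` A)" for n using dominated by (intro bdd_aboveI2)
  then have "0 \<le> (SUP x\<in>A. f n x)" for n
    using nonneg[OF \<open>x \<in> A\<close>] cSUP_upper[OF \<open>x \<in> A\<close>] by (meson order.trans)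
  then show "\<forall>\<^sub>F n in sequentially. 0 \<le> (SUP x\<in>A. f n x)" by simp
  have "(SUP x\<in>A. f n x) \<le> g n" for n
    using \<open>A \<noteq> {}\<close> dominated by (rule cSUP_least)
  then show "\<forall>\<^sub>F n in sequentially. (SUP x\<in>A. f n x) \<le> g n" by simp
qed

section \<open>I.i.d. observations with independent noise\<close>

locale iid_design_noise = prob_space M for M :: "'a measure" +
  fixes X :: "nat \<Rightarrow> 'a \<Rightarrow> real^'r" and Z :: "nat \<Rightarrow> 'a \<Rightarrow> real^'s" and eps :: "nat \<Rightarrow> 'a \<Rightarrow> real"
  assumes measurable_X[measurable]: "\<And>i. X i \<in> borel_measurable M"
    and measurable_Z[measurable]: "\<And>i. Z i \<in> borel_measurable M"
    and measurable_eps[measurable]: "\<And>i. eps i \<in> borel_measurable M"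
    and indep: "indep_vars (\<lambda>_. borel) (\<lambda>i \<omega>. (X i \<omega>, Z i \<omega>, eps i \<omega>)) UNIV"
    and ident: "\<And>i. distr M borel (\<lambda>\<omega>. (X i \<omega>, Z i \<omega>, eps i \<omega>))
                    = distr M borel (\<lambda>\<omega>. (X 0 \<omega>, Z 0 \<omega>, eps 0 \<omega>))"
    and eps_indep: "distr M (borel \<Otimes>\<^sub>M borel) (\<lambda>\<omega>. ((X 0 \<omega>, Z 0 \<omega>), eps 0 \<omega>))
                       = distr M borel (\<lambda>\<omega>. (X 0 \<omega>, Z 0 \<omega>)) \<Otimes>\<^sub>M distr M borel (eps 0)"
begin

definition obs :: "nat \<Rightarrow> 'a \<Rightarrow> (real^'r) \<times> (real^'s) \<times> real" where
  "obs i \<omega> = (X i \<omega>, Z i \<omega>, eps i \<omega>)"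

lemma measurable_obs[measurable]: "obs i \<in> borel_measurable M"
  unfolding obs_def by measurable

lemma distr_obs: "distr M borel (obs i) = distr M borel (obs 0)"
  using ident[of i] by (simp add: obs_def[abs_def])

abbreviation "obs_law \<equiv> distr M borel (obs 0)"

abbreviation "obs_on B \<omega> \<equiv> restrict (\<lambda>i. obs i \<omega>) B"

lemma measurable_obs_on[measurable]: "obs_on B \<in> M \<rightarrow>\<^sub>M PiM B (\<lambda>_. borel)"
  by (intro measurable_restrict) simp

lemma nn_integral_obs_indep:
  assumes "j \<notin> B" and [measurable]: "H \<in> borel_measurable (borel \<Otimes>\<^sub>M PiM B (\<lambda>_. borel))"
  shows "(\<integral>\<^sup>+\<omega>. H (obs j \<omega>, obs_on B \<omega>) \<partial>M)
      = (\<integral>\<^sup>+\<rho>. \<integral>\<^sup>+t. H (t, \<rho>) \<partial>obs_law \<partial>distr M (PiM B (\<lambda>_. borel)) (obs_on B))"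
proof -
  let ?R = "distr M (PiM B (\<lambda>_. borel)) (obs_on B)"
  let ?J = "distr M (PiM {j} (\<lambda>_. borel)) (obs_on {j})"
  interpret J: prob_space ?J by (rule prob_space_distr) measurable
  interpret R: prob_space ?R by (rule prob_space_distr) measurable
  interpret JR: pair_prob_space ?J ?R ..
  have "indep_var (PiM {j} (\<lambda>_. borel)) (obs_on {j}) (PiM B (\<lambda>_. borel)) (obs_on B)"
    using \<open>j \<notin> B\<close> indep by (intro indep_var_restrict) (auto simp: obs_def[abs_def])
  then have joint: "distr M (PiM {j} (\<lambda>_. borel) \<Otimes>\<^sub>M PiM B (\<lambda>_. borel)) (\<lambda>\<omega>. (obs_on {j} \<omega>, obs_on B \<omega>))
      = ?J \<Otimes>\<^sub>M ?R"
    by (simp add: indep_var_distribution_eq)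
  have [measurable]: "(\<lambda>f. f j) \<in> PiM {j} (\<lambda>_. borel) \<rightarrow>\<^sub>M (borel :: ((real^'r) \<times> (real^'s) \<times> real) measure)"
    by (rule measurable_component_singleton) simp
  have "(\<integral>\<^sup>+\<omega>. H (obs j \<omega>, obs_on B \<omega>) \<partial>M) = (\<integral>\<^sup>+x. H (fst x j, snd x) \<partial>(?J \<Otimes>\<^sub>M ?R))"
    by (simp add: joint[symmetric] nn_integral_distr)
  also have "\<dots> = (\<integral>\<^sup>+\<rho>. \<integral>\<^sup>+f. H (f j, \<rho>) \<partial>?J \<partial>?R)"
    by (subst JR.nn_integral_snd[symmetric]) simp_all
  also have "\<dots> = (\<integral>\<^sup>+\<rho>. \<integral>\<^sup>+t. H (t, \<rho>) \<partial>obs_law \<partial>?R)"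
    by (intro nn_integral_cong) (simp add: nn_integral_distr distr_obs[of j, symmetric])
  finally show ?thesis .
qed

lemma nn_integral_obs_law_eps_sq:
  assumes [measurable]: "f \<in> borel_measurable (borel :: (real^'s) measure)"
  shows "(\<integral>\<^sup>+t. f (fst (snd t)) * ennreal ((snd (snd t))\<^sup>2) \<partial>obs_law)
       = (\<integral>\<^sup>+t. f (fst (snd t)) \<partial>obs_law) * (\<integral>\<^sup>+\<omega>. ennreal ((eps 0 \<omega>)\<^sup>2) \<partial>M)"
proof -
  let ?XZ = "distr M borel (\<lambda>\<omega>. (X 0 \<omega>, Z 0 \<omega>))" and ?E = "distr M borel (eps 0)"
  interpret XZ: prob_space ?XZ by (rule prob_space_distr) measurable
  interpret E: prob_space ?E by (rule prob_space_distr) measurable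
  interpret XZE: pair_prob_space ?XZ ?E ..
  have "(\<integral>\<^sup>+t. f (fst (snd t)) * ennreal ((snd (snd t))\<^sup>2) \<partial>obs_law)
      = (\<integral>\<^sup>+x. f (snd (fst x)) * ennreal ((snd x)\<^sup>2)
           \<partial>distr M (borel \<Otimes>\<^sub>M borel) (\<lambda>\<omega>. ((X 0 \<omega>, Z 0 \<omega>), eps 0 \<omega>)))"
    by (simp add: nn_integral_distr obs_def)
  also have "\<dots> = (\<integral>\<^sup>+xz. \<integral>\<^sup>+e. f (snd xz) * ennreal (e\<^sup>2) \<partial>?E \<partial>?XZ)"
    unfolding eps_indep by (subst E.nn_integral_fst[symmetric]) simp_all
  also have "\<dots> = (\<integral>\<^sup>+xz. f (snd xz) \<partial>?XZ) * (\<integral>\<^sup>+e. ennreal (e\<^sup>2) \<partial>?E)"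
    by (simp add: nn_integral_cmult nn_integral_multc)
  also have "\<dots> = (\<integral>\<^sup>+t. f (fst (snd t)) \<partial>obs_law) * (\<integral>\<^sup>+\<omega>. ennreal ((eps 0 \<omega>)\<^sup>2) \<partial>M)"
    by (simp add: nn_integral_distr obs_def)
  finally show ?thesis .
qed

text \<open>\<open>eps j\<close> is independent of \<open>Z j\<close> (by \<open>eps_indep\<close>) and of all other observations
  (by \<open>indep\<close>).\<close>
lemma nn_integral_eps_sq_factor:
  assumes "j \<notin> B" and [measurable]: "g \<in> borel_measurable (borel \<Otimes>\<^sub>M PiM B (\<lambda>_. borel))"
  shows "(\<integral>\<^sup>+\<omega>. g (Z j \<omega>, obs_on B \<omega>) * ennreal ((eps j \<omega>)\<^sup>2) \<partial>M)
      = (\<integral>\<^sup>+\<omega>. g (Z j \<omega>, obs_on B \<omega>) \<partial>M) * (\<integral>\<^sup>+\<omega>. ennreal ((eps 0 \<omega>)\<^sup>2) \<partial>M)"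
proof -
  let ?R = "distr M (PiM B (\<lambda>_. borel)) (obs_on B)"
  let ?c = "\<integral>\<^sup>+\<omega>. ennreal ((eps 0 \<omega>)\<^sup>2) \<partial>M"
  interpret L: prob_space obs_law by (rule prob_space_distr) measurable
  have [measurable]: "(\<lambda>\<rho>. \<integral>\<^sup>+t. g (fst (snd t), \<rho>) \<partial>obs_law) \<in> borel_measurable ?R"
    by (rule L.borel_measurable_nn_integral_fst[where f="\<lambda>(\<rho>, t). g (fst (snd t), \<rho>)", simplified])
       measurable
  have "(\<integral>\<^sup>+\<omega>. g (Z j \<omega>, obs_on B \<omega>) * ennreal ((eps j \<omega>)\<^sup>2) \<partial>M)
     = (\<integral>\<^sup>+\<rho>. \<integral>\<^sup>+t. g (fst (snd t), \<rho>) * ennreal ((snd (snd t))\<^sup>2) \<partial>obs_law \<partial>?R)"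
    using nn_integral_obs_indep[OF \<open>j \<notin> B\<close>, of "\<lambda>(t, \<rho>). g (fst (snd t), \<rho>) * ennreal ((snd (snd t))\<^sup>2)"]
    by (simp add: obs_def)
  also have "\<dots> = (\<integral>\<^sup>+\<rho>. (\<integral>\<^sup>+t. g (fst (snd t), \<rho>) \<partial>obs_law) * ?c \<partial>?R)"
    by (intro nn_integral_cong nn_integral_obs_law_eps_sq) simp
  also have "\<dots> = (\<integral>\<^sup>+\<rho>. \<integral>\<^sup>+t. g (fst (snd t), \<rho>) \<partial>obs_law \<partial>?R) * ?c"
    by (rule nn_integral_multc) measurable
  also have "(\<integral>\<^sup>+\<rho>. \<integral>\<^sup>+t. g (fst (snd t), \<rho>) \<partial>obs_law \<partial>?R) = (\<integral>\<^sup>+\<omega>. g (Z j \<omega>, obs_on B \<omega>) \<partial>M)"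
    using nn_integral_obs_indep[OF \<open>j \<notin> B\<close>, of "\<lambda>(t, \<rho>). g (fst (snd t), \<rho>)"]
    by (simp add: obs_def)
  finally show ?thesis .
qed

lemma emeasure_inner_tie:
  assumes dens: "distributed M lborel (Z 0) fZ" and "C \<noteq> 0" and "j \<noteq> k"
  shows "emeasure M {\<omega>\<in>space M. Z j \<omega> \<bullet> C = Z k \<omega> \<bullet> C} = 0"
proof -
  let ?H = "\<lambda>(t::(real^'r) \<times> (real^'s) \<times> real, \<rho>::nat \<Rightarrow> (real^'r) \<times> (real^'s) \<times> real).
      (if fst (snd t) \<bullet> C = fst (snd (\<rho> k)) \<bullet> C then 1 else 0 :: ennreal)"
  have [measurable]: "(\<lambda>f. f k) \<in> PiM {k} (\<lambda>_. borel) \<rightarrow>\<^sub>M (borel :: ((real^'r) \<times> (real^'s) \<times> real) measure)"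
    by (rule measurable_component_singleton) simp
  have "emeasure M {\<omega>\<in>space M. Z j \<omega> \<bullet> C = Z k \<omega> \<bullet> C} = (\<integral>\<^sup>+\<omega>. ?H (obs j \<omega>, obs_on {k} \<omega>) \<partial>M)"
    by (subst nn_integral_if_eq_emeasure[symmetric]) (simp_all add: obs_def)
  also have "\<dots> = (\<integral>\<^sup>+\<rho>. \<integral>\<^sup>+t. ?H (t, \<rho>) \<partial>obs_law \<partial>distr M (PiM {k} (\<lambda>_. borel)) (obs_on {k}))"
    using \<open>j \<noteq> k\<close> by (intro nn_integral_obs_indep) simp_all
  also have "\<dots> = 0"
  proof (rule nn_integral_zero')
    show "AE \<rho> in distr M (PiM {k} (\<lambda>_. borel)) (obs_on {k}). (\<integral>\<^sup>+t. ?H (t, \<rho>) \<partial>obs_law) = 0"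
    proof (rule AE_I2)
      fix \<rho> :: "nat \<Rightarrow> (real^'r) \<times> (real^'s) \<times> real"
      have "(\<integral>\<^sup>+t. ?H (t, \<rho>) \<partial>obs_law)
          = (\<integral>\<^sup>+\<omega>. (if Z 0 \<omega> \<bullet> C = fst (snd (\<rho> k)) \<bullet> C then 1 else 0) \<partial>M)"
        by (subst nn_integral_distr) (simp_all add: obs_def)
      also have "\<dots> = emeasure M {\<omega>\<in>space M. Z 0 \<omega> \<bullet> C = fst (snd (\<rho> k)) \<bullet> C}"
        by (rule nn_integral_if_eq_emeasure) measurable
      finally show "(\<integral>\<^sup>+t. ?H (t, \<rho>) \<partial>obs_law) = 0"
        using emeasure_inner_eq_const[OF dens \<open>C \<noteq> 0\<close>] by simp
    qed
  qed
  finally show ?thesis .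
qed

lemma AE_inj_on_inner:
  assumes "distributed M lborel (Z 0) fZ" and "C \<noteq> 0"
  shows "AE \<omega> in M. inj_on (\<lambda>k. Z k \<omega> \<bullet> C) {..<n}"
proof -
  have "AE \<omega> in M. Z j \<omega> \<bullet> C \<noteq> Z k \<omega> \<bullet> C" if "j \<noteq> k" for j k
    using emeasure_inner_tie[OF assms that]
    by (intro AE_I[where N="{\<omega>\<in>space M. Z j \<omega> \<bullet> C = Z k \<omega> \<bullet> C}"]) auto
  then have "AE \<omega> in M. \<forall>j\<in>{..<n}. \<forall>k\<in>{..<n}. j \<noteq> k \<longrightarrow> Z j \<omega> \<bullet> C \<noteq> Z k \<omega> \<bullet> C"
    by (intro eventually_ball_finite ballI finite_lessThan) auto
  then show ?thesis by eventually_elim (auto simp: inj_on_def)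
qed

lemma sample_rank_inner_eq_count:
  assumes "j < n"
  shows "real (sample_rank n (\<lambda>k. Z k \<omega> \<bullet> C) j)
       = 1 + (\<Sum>k\<in>{..<n} - {j}. if Z k \<omega> \<bullet> C \<le> Z j \<omega> \<bullet> C then 1 else 0)"
proof -
  have "{k. k < n \<and> Z k \<omega> \<bullet> C \<le> Z j \<omega> \<bullet> C} = insert j {k\<in>{..<n} - {j}. Z k \<omega> \<bullet> C \<le> Z j \<omega> \<bullet> C}"
    using assms by auto
  then have "real (sample_rank n (\<lambda>k. Z k \<omega> \<bullet> C) j)
      = 1 + real (card {k\<in>{..<n} - {j}. Z k \<omega> \<bullet> C \<le> Z j \<omega> \<bullet> C})"
    unfolding sample_rank_def by simp
  also have "real (card {k\<in>{..<n} - {j}. Z k \<omega> \<bullet> C \<le> Z j \<omega> \<bullet> C})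
      = (\<Sum>k\<in>{..<n} - {j}. if Z k \<omega> \<bullet> C \<le> Z j \<omega> \<bullet> C then 1 else 0)"
    by (rule real_card_filter_eq_sum) simp
  finally show ?thesis .
qed

lemma measurable_sample_rank_inner[measurable]:
  "(\<lambda>\<omega>. real (sample_rank n (\<lambda>k. Z k \<omega> \<bullet> C) j)) \<in> borel_measurable M"
proof -
  have "real (sample_rank n (\<lambda>k. Z k \<omega> \<bullet> C) j) = (\<Sum>k<n. if Z k \<omega> \<bullet> C \<le> Z j \<omega> \<bullet> C then 1 else 0)"
    for \<omega>
  proof -
    have "sample_rank n (\<lambda>k. Z k \<omega> \<bullet> C) j = card {k\<in>{..<n}. Z k \<omega> \<bullet> C \<le> Z j \<omega> \<bullet> C}"
      unfolding sample_rank_def by (rule arg_cong[where f=card]) auto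
    then show ?thesis by (simp only: real_card_filter_eq_sum[OF finite_lessThan])
  qed
  then show ?thesis by simp
qed

lemma measurable_rank_window_inner[measurable]:
  "Measurable.pred M (\<lambda>\<omega>. j \<in> rank_window p n (\<lambda>k. Z k \<omega> \<bullet> C) c)"
  unfolding rank_window_def by measurable

lemma integral_eps_sq_on_rank_window:
  assumes "j < n"
  shows "(\<integral>\<omega>. (if j \<in> rank_window p n (\<lambda>k. Z k \<omega> \<bullet> C) c then (eps j \<omega>)\<^sup>2 else 0) \<partial>M)
    = prob {\<omega>\<in>space M. j \<in> rank_window p n (\<lambda>k. Z k \<omega> \<bullet> C) c} * (\<integral>\<omega>. (eps 0 \<omega>)\<^sup>2 \<partial>M)"
proof -
  let ?B = "{..<n} - {j}" and ?h = "(real p - 1) / 2"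
  let ?A = "{\<omega>\<in>space M. j \<in> rank_window p n (\<lambda>k. Z k \<omega> \<bullet> C) c}"
  txt \<open>The event \<open>j \<in> rank_window\<close>, written as a function of \<open>Z j\<close> and the other observations.\<close>
  let ?g = "\<lambda>(z::real^'s, \<rho>::nat \<Rightarrow> (real^'r) \<times> (real^'s) \<times> real).
     (if \<bar>1 + (\<Sum>k\<in>?B. if fst (snd (\<rho> k)) \<bullet> C \<le> z \<bullet> C then 1 else 0) - real c\<bar> \<le> ?h then 1 else 0 :: ennreal)"
  have g_meas: "?g \<in> borel_measurable (borel \<Otimes>\<^sub>M PiM ?B (\<lambda>_. borel))"
  proof -
    have [measurable]: "k \<in> ?B \<Longrightarrow>
        (\<lambda>f. f k) \<in> PiM ?B (\<lambda>_. borel) \<rightarrow>\<^sub>M (borel :: ((real^'r) \<times> (real^'s) \<times> real) measure)" for k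
      by (rule measurable_component_singleton) simp
    show ?thesis by measurable
  qed
  have factor: "(\<integral>\<^sup>+\<omega>. ?g (Z j \<omega>, obs_on ?B \<omega>) * ennreal ((eps j \<omega>)\<^sup>2) \<partial>M)
      = (\<integral>\<^sup>+\<omega>. ?g (Z j \<omega>, obs_on ?B \<omega>) \<partial>M) * (\<integral>\<^sup>+\<omega>. ennreal ((eps 0 \<omega>)\<^sup>2) \<partial>M)"
    by (rule nn_integral_eps_sq_factor[OF _ g_meas]) simp
  have "(\<Sum>k\<in>?B. if fst (snd (obs_on ?B \<omega> k)) \<bullet> C \<le> z \<bullet> C then 1 else 0)
      = (\<Sum>k\<in>?B. if Z k \<omega> \<bullet> C \<le> z \<bullet> C then 1 else (0::real))" for \<omega> and z :: "real^'s"
    by (intro sum.cong) (auto simp: obs_def)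
  then have g_eq: "?g (Z j \<omega>, obs_on ?B \<omega>) = (if \<omega> \<in> ?A then 1 else 0)" if "\<omega> \<in> space M" for \<omega>
    using that assms by (simp add: rank_window_def sample_rank_inner_eq_count[OF assms])
  have nn_eq: "(\<integral>\<^sup>+\<omega>. ennreal (if \<omega> \<in> ?A then (eps j \<omega>)\<^sup>2 else 0) \<partial>M)
      = (\<integral>\<^sup>+\<omega>. ?g (Z j \<omega>, obs_on ?B \<omega>) * ennreal ((eps j \<omega>)\<^sup>2) \<partial>M)"
  proof (rule nn_integral_cong)
    fix \<omega> assume "\<omega> \<in> space M"
    show "ennreal (if \<omega> \<in> ?A then (eps j \<omega>)\<^sup>2 else 0) = ?g (Z j \<omega>, obs_on ?B \<omega>) * ennreal ((eps j \<omega>)\<^sup>2)"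
      by (simp only: g_eq[OF \<open>\<omega> \<in> space M\<close>]) simp
  qed
  have "(\<integral>\<omega>. (if \<omega> \<in> ?A then (eps j \<omega>)\<^sup>2 else 0) \<partial>M)
     = enn2real (\<integral>\<^sup>+\<omega>. ennreal (if \<omega> \<in> ?A then (eps j \<omega>)\<^sup>2 else 0) \<partial>M)"
    by (rule integral_eq_nn_integral) auto
  also have "\<dots> = enn2real (\<integral>\<^sup>+\<omega>. ?g (Z j \<omega>, obs_on ?B \<omega>) * ennreal ((eps j \<omega>)\<^sup>2) \<partial>M)"
    using nn_eq by (rule arg_cong)
  also have "\<dots> = enn2real ((\<integral>\<^sup>+\<omega>. (if \<omega> \<in> ?A then 1 else 0) \<partial>M) * (\<integral>\<^sup>+\<omega>. ennreal ((eps 0 \<omega>)\<^sup>2) \<partial>M))"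
    unfolding factor by (intro arg_cong[where f=enn2real] arg_cong2[where f=times] nn_integral_cong g_eq) simp_all
  also have "\<dots> = prob ?A * (\<integral>\<omega>. (eps 0 \<omega>)\<^sup>2 \<partial>M)"
    by (subst nn_integral_if_eq_emeasure) (simp_all add: enn2real_mult measure_def integral_eq_nn_integral)
  also have "(\<integral>\<omega>. (if \<omega> \<in> ?A then (eps j \<omega>)\<^sup>2 else 0) \<partial>M)
      = (\<integral>\<omega>. (if j \<in> rank_window p n (\<lambda>k. Z k \<omega> \<bullet> C) c then (eps j \<omega>)\<^sup>2 else 0) \<partial>M)"
    by (intro Bochner_Integration.integral_cong) auto
  finally show ?thesis .
qed

lemma sum_prob_rank_window_le:
  assumes "distributed M lborel (Z 0) fZ" and "C \<noteq> 0" and "p \<ge> 1"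
  shows "(\<Sum>j<n. prob {\<omega>\<in>space M. j \<in> rank_window p n (\<lambda>k. Z k \<omega> \<bullet> C) c}) \<le> real p"
proof -
  let ?W = "\<lambda>\<omega>. rank_window p n (\<lambda>k. Z k \<omega> \<bullet> C) c"
  have events: "{\<omega>\<in>space M. j \<in> ?W \<omega>} \<in> sets M" for j by measurable
  then have indicators: "integrable M (indicator {\<omega>\<in>space M. j \<in> ?W \<omega>} :: 'a \<Rightarrow> real)" for j
    by (simp add: less_top[symmetric] emeasure_finite)
  have "(\<Sum>j<n. prob {\<omega>\<in>space M. j \<in> ?W \<omega>})
      = (\<integral>\<omega>. (\<Sum>j<n. indicator {\<omega>\<in>space M. j \<in> ?W \<omega>} \<omega>) \<partial>M)"
    by (subst Bochner_Integration.integral_sum)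
       (simp_all add: Int_absorb2 events indicators)
  also have "\<dots> \<le> (\<integral>\<omega>. real p \<partial>M)"
  proof (rule integral_mono_AE)
    show "AE \<omega> in M. (\<Sum>j<n. indicator {\<omega>\<in>space M. j \<in> ?W \<omega>} \<omega>) \<le> real p"
      using AE_inj_on_inner[OF assms(1,2), of n] AE_space
    proof eventually_elim
      case (elim \<omega>)
      have "(\<Sum>j<n. indicator {\<omega>\<in>space M. j \<in> ?W \<omega>} \<omega> :: real) = real (card {j\<in>{..<n}. j \<in> ?W \<omega>})"
        using elim(2) by (simp add: indicator_def sum.If_cases Int_def)
      also have "{j\<in>{..<n}. j \<in> ?W \<omega>} = ?W \<omega>" by (auto simp: rank_window_def)
      finally show ?case using card_rank_window_le[OF elim(1) \<open>p \<ge> 1\<close>] by simp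
    qed
  qed (simp_all add: indicators)
  finally show ?thesis by (simp add: prob_space)
qed

lemma integrable_eps_sq:
  assumes "integrable M (\<lambda>\<omega>. (eps 0 \<omega>)\<^sup>2)"
  shows "integrable M (\<lambda>\<omega>. (eps j \<omega>)\<^sup>2)"
proof -
  have "integrable (distr M borel (obs 0)) (\<lambda>t. (snd (snd t))\<^sup>2)"
    using assms by (subst integrable_distr_eq) (simp_all add: obs_def)
  then have "integrable (distr M borel (obs j)) (\<lambda>t. (snd (snd t))\<^sup>2)"
    by (simp only: distr_obs[of j])
  then show ?thesis by (subst (asm) integrable_distr_eq) (simp_all add: obs_def)
qed

abbreviation "noise_energy p n b r C \<omega> \<equiv>
  window_energy p n b r (\<lambda>k. Z k \<omega> \<bullet> C) (\<lambda>j. (eps j \<omega>)\<^sup>2)"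

lemma integral_noise_energy_le:
  assumes "distributed M lborel (Z 0) fZ" and "C \<noteq> 0" and "p \<ge> 1"
    and eps_sq: "integrable M (\<lambda>\<omega>. (eps 0 \<omega>)\<^sup>2)"
  shows "integrable M (noise_energy p n b r C)"
    and "(\<integral>\<omega>. noise_energy p n b r C \<omega> \<partial>M) \<le> real r * real p * real p * (\<integral>\<omega>. (eps 0 \<omega>)\<^sup>2 \<partial>M)"
proof -
  let ?pos = "\<lambda>i k. (i - 1) * (b + p) + k"
  let ?t = "\<lambda>i k j \<omega>. if j \<in> rank_window p n (\<lambda>k. Z k \<omega> \<bullet> C) (?pos i k) then (eps j \<omega>)\<^sup>2 else 0"
  let ?E = "\<integral>\<omega>. (eps 0 \<omega>)\<^sup>2 \<partial>M"
  have int: "integrable M (?t i k j)" for i k j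
    by (rule Bochner_Integration.integrable_bound[OF integrable_eps_sq[OF eps_sq, of j]]) auto
  have energy: "noise_energy p n b r C = (\<lambda>\<omega>. \<Sum>i\<in>{1..r}. \<Sum>k\<in>{b+1..b+p}. \<Sum>j<n. ?t i k j \<omega>)"
    by (simp add: window_energy_eq_sum_lessThan[abs_def])
  show "integrable M (noise_energy p n b r C)"
    unfolding energy using int by simp
  have "(\<integral>\<omega>. noise_energy p n b r C \<omega> \<partial>M) = (\<Sum>i\<in>{1..r}. \<Sum>k\<in>{b+1..b+p}. \<Sum>j<n. \<integral>\<omega>. ?t i k j \<omega> \<partial>M)"
    unfolding energy using int by (simp add: Bochner_Integration.integral_sum)
  also have "\<dots> = (\<Sum>i\<in>{1..r}. \<Sum>k\<in>{b+1..b+p}.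
      (\<Sum>j<n. prob {\<omega>\<in>space M. j \<in> rank_window p n (\<lambda>k. Z k \<omega> \<bullet> C) (?pos i k)}) * ?E)"
    unfolding sum_distrib_right
    by (intro sum.cong refl integral_eps_sq_on_rank_window) simp
  also have "\<dots> \<le> (\<Sum>i\<in>{1..r}. \<Sum>k\<in>{b+1..b+p}. real p * ?E)"
    using sum_prob_rank_window_le[OF assms(1-3)] by (intro sum_mono mult_right_mono) simp_all
  also have "\<dots> = real r * real p * real p * ?E" by simp
  finally show "(\<integral>\<omega>. noise_energy p n b r C \<omega> \<partial>M) \<le> real r * real p * real p * ?E" .
qed

lemma tail_prob_le_markov:
  fixes sg :: "real^'r \<Rightarrow> real^'s \<Rightarrow> real"
  assumes dens: "distributed M lborel (Z 0) fZ" and "p \<ge> 2"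
    and sg_bdd: "\<And>x z. (sg x z)\<^sup>2 \<le> B" and eps_sq: "integrable M (\<lambda>\<omega>. (eps 0 \<omega>)\<^sup>2)"
    and "e > 0" and "C \<noteq> 0" and "D > 0"
  shows "measure M {\<omega>\<in>space M.
           e \<le> \<bar>S_V p n b r (\<lambda>k. Z k \<omega> \<bullet> C) (\<lambda>j. sg (X j \<omega>) (Z j \<omega>) * eps j \<omega>)\<bar> / D}
     \<le> 2 * B * real r * real p * real p * (\<integral>\<omega>. (eps 0 \<omega>)\<^sup>2 \<partial>M) / (e * D)"
proof -
  let ?E = "noise_energy p n b r C"
  have "0 \<le> B" using sg_bdd[of undefined undefined] by (meson order_trans zero_le_power2)
  have "p \<ge> 1" using \<open>p \<ge> 2\<close> by simp
  note energy = integral_noise_energy_le[OF dens \<open>C \<noteq> 0\<close> \<open>p \<ge> 1\<close> eps_sq, of n b r]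
  have [measurable]: "?E \<in> borel_measurable M"
    using energy(1) by (rule borel_measurable_integrable)
  have "AE \<omega> in M. e \<le> \<bar>S_V p n b r (\<lambda>k. Z k \<omega> \<bullet> C) (\<lambda>j. sg (X j \<omega>) (Z j \<omega>) * eps j \<omega>)\<bar> / D
                  \<longrightarrow> e * D \<le> 2 * B * ?E \<omega>"
    using AE_inj_on_inner[OF dens \<open>C \<noteq> 0\<close>, of n]
  proof eventually_elim
    case (elim \<omega>)
    have "(sg (X j \<omega>) (Z j \<omega>) * eps j \<omega>)\<^sup>2 \<le> B * (eps j \<omega>)\<^sup>2" for j
      unfolding power_mult_distrib by (intro mult_right_mono sg_bdd) simp
    then have energy_le: "window_energy p n b r (\<lambda>k. Z k \<omega> \<bullet> C) (\<lambda>j. (sg (X j \<omega>) (Z j \<omega>) * eps j \<omega>)\<^sup>2)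
        \<le> B * ?E \<omega>"
      by (subst window_energy_cmult[symmetric]) (rule window_energy_mono)
    show ?case
    proof
      let ?S = "S_V p n b r (\<lambda>k. Z k \<omega> \<bullet> C) (\<lambda>j. sg (X j \<omega>) (Z j \<omega>) * eps j \<omega>)"
      assume "e \<le> \<bar>?S\<bar> / D"
      then have "e * D \<le> \<bar>?S\<bar>" using \<open>D > 0\<close> by (simp add: le_divide_eq)
      also have "\<dots> \<le> 2 * window_energy p n b r (\<lambda>k. Z k \<omega> \<bullet> C) (\<lambda>j. (sg (X j \<omega>) (Z j \<omega>) * eps j \<omega>)\<^sup>2)"
        by (rule abs_S_V_le_window_energy[OF elim \<open>p \<ge> 2\<close>])
      finally show "e * D \<le> 2 * B * ?E \<omega>" using energy_le by simp
    qed
  qed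
  then have "measure M {\<omega>\<in>space M.
           e \<le> \<bar>S_V p n b r (\<lambda>k. Z k \<omega> \<bullet> C) (\<lambda>j. sg (X j \<omega>) (Z j \<omega>) * eps j \<omega>)\<bar> / D}
      \<le> measure M {\<omega>\<in>space M. e * D \<le> 2 * B * ?E \<omega>}"
    by (intro finite_measure_mono_AE) auto
  also have "\<dots> \<le> (\<integral>\<omega>. 2 * B * ?E \<omega> \<partial>M) / (e * D)"
    using energy(1) \<open>0 \<le> B\<close> \<open>e > 0\<close> \<open>D > 0\<close>
    by (intro integral_Markov_inequality_measure[where A="space M"])
       (auto intro!: mult_nonneg_nonneg window_energy_nonneg)
  also have "\<dots> \<le> 2 * B * real r * real p * real p * (\<integral>\<omega>. (eps 0 \<omega>)\<^sup>2 \<partial>M) / (e * D)"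
    using energy(2) \<open>0 \<le> B\<close> \<open>e > 0\<close> \<open>D > 0\<close>
    by (intro divide_right_mono) (auto simp: mult.assoc intro: mult_left_mono)
  finally show ?thesis .
qed

lemma tail_prob_le_rate:
  fixes sg :: "real^'r \<Rightarrow> real^'s \<Rightarrow> real"
  assumes dens: "distributed M lborel (Z 0) fZ" and "p \<ge> 2"
    and sg_bdd: "\<And>x z. (sg x z)\<^sup>2 \<le> B" and eps_sq: "integrable M (\<lambda>\<omega>. (eps 0 \<omega>)\<^sup>2)"
    and "e > 0" and "C \<noteq> 0" and "\<kappa> > 0" and "D \<ge> 0"
    and lower: "D \<noteq> 0 \<Longrightarrow> n > 0 \<and> \<kappa> * sqrt (real n) \<le> D"
  shows "measure M {\<omega>\<in>space M.
           e \<le> \<bar>S_V p n b r (\<lambda>k. Z k \<omega> \<bullet> C) (\<lambda>j. sg (X j \<omega>) (Z j \<omega>) * eps j \<omega>)\<bar> / D}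
     \<le> 2 * B * real p * real p * (\<integral>\<omega>. (eps 0 \<omega>)\<^sup>2 \<partial>M) / (e * \<kappa>) * (real r / sqrt (real n))"
proof -
  have "0 \<le> B" using sg_bdd[of undefined undefined] by (meson order_trans zero_le_power2)
  show ?thesis
  proof (cases "D = 0")
    case True
    txt \<open>Then the event is empty, as \<open>x / 0 = 0\<close>.\<close>
    have "0 \<le> 2 * B * real p * real p * (\<integral>\<omega>. (eps 0 \<omega>)\<^sup>2 \<partial>M) / (e * \<kappa>) * (real r / sqrt (real n))"
      using \<open>e > 0\<close> \<open>0 \<le> B\<close> \<open>\<kappa> > 0\<close> by (auto intro!: mult_nonneg_nonneg divide_nonneg_nonneg)
    then show ?thesis
      unfolding True using \<open>e > 0\<close> by (simp add: not_le)
  next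
    case False
    then have "n > 0" and "\<kappa> * sqrt (real n) \<le> D" and "D > 0"
      using lower \<open>D \<ge> 0\<close> by auto
    let ?N = "2 * B * real r * real p * real p * (\<integral>\<omega>. (eps 0 \<omega>)\<^sup>2 \<partial>M)"
    have "?N / (e * D) \<le> ?N / (e * (\<kappa> * sqrt (real n)))"
      using \<open>n > 0\<close> \<open>e > 0\<close> \<open>\<kappa> > 0\<close> \<open>0 \<le> B\<close> \<open>D > 0\<close> \<open>\<kappa> * sqrt (real n) \<le> D\<close>
      by (intro divide_left_mono mult_left_mono mult_pos_pos) auto
    also have "\<dots> = 2 * B * real p * real p * (\<integral>\<omega>. (eps 0 \<omega>)\<^sup>2 \<partial>M) / (e * \<kappa>) * (real r / sqrt (real n))"
      using \<open>n > 0\<close> by (simp add: field_simps)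
    finally show ?thesis
      using tail_prob_le_markov[OF dens \<open>p \<ge> 2\<close> sg_bdd eps_sq \<open>e > 0\<close> \<open>C \<noteq> 0\<close> \<open>D > 0\<close>]
      by (rule order.trans[rotated])
  qed
qed

lemma tail_prob_eq_0:
  fixes sg :: "real^'r \<Rightarrow> real^'s \<Rightarrow> real"
  assumes [measurable]: "(\<lambda>(x, z). sg x z) \<in> borel_measurable borel"
    and noise_0: "AE \<omega> in M. sg (X 0 \<omega>) (Z 0 \<omega>) * eps 0 \<omega> = 0" and "e > 0"
  shows "measure M {\<omega>\<in>space M.
           e \<le> \<bar>S_V p n b r (\<lambda>k. Z k \<omega> \<bullet> C) (\<lambda>j. sg (X j \<omega>) (Z j \<omega>) * eps j \<omega>)\<bar> / D} = 0"
proof -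
  let ?\<xi> = "\<lambda>t::(real^'r) \<times> (real^'s) \<times> real. sg (fst t) (fst (snd t)) * snd (snd t)"
  have "(\<lambda>t::(real^'r) \<times> (real^'s) \<times> real. (\<lambda>(x, z). sg x z) (fst t, fst (snd t)) * snd (snd t))
      \<in> borel_measurable borel"
    by measurable
  then have [measurable]: "?\<xi> \<in> borel_measurable borel" by simp
  have zero_set: "{t \<in> space borel. ?\<xi> t = 0} \<in> sets borel" by measurable
  have "AE \<omega> in M. sg (X j \<omega>) (Z j \<omega>) * eps j \<omega> = 0" for j
  proof -
    have "AE t in distr M borel (obs 0). ?\<xi> t = 0"
      using noise_0 unfolding AE_distr_iff[OF measurable_obs zero_set] by (simp add: obs_def)
    then have "AE t in distr M borel (obs j). ?\<xi> t = 0"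
      by (simp only: distr_obs[of j])
    then show ?thesis unfolding AE_distr_iff[OF measurable_obs zero_set] by (simp add: obs_def)
  qed
  then have "AE \<omega> in M. \<forall>j\<in>{..<n}. sg (X j \<omega>) (Z j \<omega>) * eps j \<omega> = 0"
    by (intro eventually_ball_finite ballI) simp_all
  then have "AE \<omega> in M. \<not> e \<le> \<bar>S_V p n b r (\<lambda>k. Z k \<omega> \<bullet> C) (\<lambda>j. sg (X j \<omega>) (Z j \<omega>) * eps j \<omega>)\<bar> / D"
    by eventually_elim (use \<open>e > 0\<close> in \<open>simp add: S_V_eq_0_if_noise_0\<close>)
  then show ?thesis by (rule prob_eq_0_AE)
qed

lemma integrable_noise_sq:
  fixes sg :: "real^'r \<Rightarrow> real^'s \<Rightarrow> real"
  assumes sg_meas: "(\<lambda>(x, z). sg x z) \<in> borel_measurable borel"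
    and sg_bdd: "\<And>x z. (sg x z)\<^sup>2 \<le> B" and eps_sq: "integrable M (\<lambda>\<omega>. (eps 0 \<omega>)\<^sup>2)"
  shows "integrable M (\<lambda>\<omega>. (sg (X 0 \<omega>) (Z 0 \<omega>) * eps 0 \<omega>)\<^sup>2)"
proof -
  have "0 \<le> B" using sg_bdd[of undefined undefined] by (meson order_trans zero_le_power2)
  have "(\<lambda>\<omega>. (\<lambda>(x, z). sg x z) (X 0 \<omega>, Z 0 \<omega>)) \<in> borel_measurable M"
    by (intro measurable_compose[OF _ sg_meas]) (simp add: borel_prod[symmetric])
  then have [measurable]: "(\<lambda>\<omega>. sg (X 0 \<omega>) (Z 0 \<omega>)) \<in> borel_measurable M" by simp
  show ?thesis
    using \<open>0 \<le> B\<close> sg_bdd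
    by (intro Bochner_Integration.integrable_bound[OF integrable_mult_right[OF eps_sq, of B]] AE_I2)
       (auto simp: power_mult_distrib intro: mult_right_mono)
qed

lemma tail_prob_bound:
  fixes sg :: "real^'r \<Rightarrow> real^'s \<Rightarrow> real" and b r :: "nat \<Rightarrow> nat"
  assumes dens: "distributed M lborel (Z 0) fZ" and "p \<ge> 2"
    and sg_meas[measurable]: "(\<lambda>(x, z). sg x z) \<in> borel_measurable borel"
    and sg_bdd: "\<And>x z. (sg x z)\<^sup>2 \<le> B" and eps_sq: "integrable M (\<lambda>\<omega>. (eps 0 \<omega>)\<^sup>2)"
    and "e > 0"
  shows "\<exists>K. \<forall>n C. C \<noteq> 0 \<longrightarrow>
           measure M {\<omega>\<in>space M.
             e \<le> \<bar>S_V p n (b n) (r n) (\<lambda>k. Z k \<omega> \<bullet> C) (\<lambda>j. sg (X j \<omega>) (Z j \<omega>) * eps j \<omega>)\<bar>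
                  / (sqrt (real n) * sd p (tau M (Z 0) (\<lambda>\<omega>. sg (X 0 \<omega>) (Z 0 \<omega>) * eps 0 \<omega>) C))}
           \<le> K * (real (r n) / sqrt (real n))"
proof -
  let ?\<xi> = "\<lambda>\<omega>. sg (X 0 \<omega>) (Z 0 \<omega>) * eps 0 \<omega>"
  let ?s2 = "\<integral>\<omega>. (?\<xi> \<omega>)\<^sup>2 \<partial>M"
  let ?cp = "2 * real p * (2 * real p - 1) / (3 * (real p - 1))"
  have "?cp > 0" using \<open>p \<ge> 2\<close> by (intro divide_pos_pos mult_pos_pos) auto
  have sd_eq: "sd p t = sqrt ?cp * \<bar>t\<bar>" for t
    unfolding sd_def real_sqrt_mult real_sqrt_abs ..
  have \<xi>_sq: "integrable M (\<lambda>\<omega>. (?\<xi> \<omega>)\<^sup>2)"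
    using sg_meas sg_bdd eps_sq by (rule integrable_noise_sq)
  show ?thesis
  proof (cases "?s2 = 0")
    case True
    then have "AE \<omega> in M. ?\<xi> \<omega> = 0"
      using integral_nonneg_eq_0_iff_AE[OF \<xi>_sq] by simp
    then show ?thesis
      using tail_prob_eq_0[OF sg_meas _ \<open>e > 0\<close>] by (intro exI[of _ 0]) simp
  next
    case False
    then have "?s2 > 0" by (simp add: order_le_neq_trans)
    define \<kappa> where "\<kappa> = sqrt ?cp * ?s2\<^sup>2"
    have "\<kappa> > 0" using \<open>?cp > 0\<close> \<open>?s2 > 0\<close> by (simp add: \<kappa>_def)
    have "measure M {\<omega>\<in>space M.
             e \<le> \<bar>S_V p n (b n) (r n) (\<lambda>k. Z k \<omega> \<bullet> C) (\<lambda>j. sg (X j \<omega>) (Z j \<omega>) * eps j \<omega>)\<bar>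
                  / (sqrt (real n) * sd p (tau M (Z 0) ?\<xi> C))}
           \<le> 2 * B * real p * real p * (\<integral>\<omega>. (eps 0 \<omega>)\<^sup>2 \<partial>M) / (e * \<kappa>) * (real (r n) / sqrt (real n))"
      if "C \<noteq> 0" for n C
    proof (rule tail_prob_le_rate[OF dens \<open>p \<ge> 2\<close> sg_bdd eps_sq \<open>e > 0\<close> that \<open>\<kappa> > 0\<close>])
      show "0 \<le> sqrt (real n) * sd p (tau M (Z 0) ?\<xi> C)"
        using \<open>?cp > 0\<close> by (simp add: sd_eq)
      assume "sqrt (real n) * sd p (tau M (Z 0) ?\<xi> C) \<noteq> 0"
      then have "n > 0" and "tau M (Z 0) ?\<xi> C \<noteq> 0" by (auto simp: sd_def)
      then have "?s2\<^sup>2 \<le> \<bar>tau M (Z 0) ?\<xi> C\<bar>"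
        using square_second_moment_le_tau[OF prob_space_axioms measurable_Z \<xi>_sq] by fastforce
      then show "n > 0 \<and> \<kappa> * sqrt (real n) \<le> sqrt (real n) * sd p (tau M (Z 0) ?\<xi> C)"
        using \<open>n > 0\<close> \<open>?cp > 0\<close> by (simp add: \<kappa>_def sd_eq mult.commute mult.left_commute mult_left_mono)
    qed
    then show ?thesis by blast
  qed
qed

lemma tendsto_SUP_tail_prob_0:
  fixes sg :: "real^'r \<Rightarrow> real^'s \<Rightarrow> real" and b r :: "nat \<Rightarrow> nat"
  assumes dens: "distributed M lborel (Z 0) fZ" and "p \<ge> 2"
    and sg_meas: "(\<lambda>(x, z). sg x z) \<in> borel_measurable borel"
    and sg_bdd: "\<And>x z. (sg x z)\<^sup>2 \<le> B" and eps_sq: "integrable M (\<lambda>\<omega>. (eps 0 \<omega>)\<^sup>2)"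
    and blocks: "(\<lambda>n. real (r n) / sqrt (real n)) \<longlonglongrightarrow> 0" and "e > 0"
  shows "(\<lambda>n. SUP C\<in>{C::real^'s. norm C = 1}. measure M {\<omega>\<in>space M.
           e \<le> \<bar>S_V p n (b n) (r n) (\<lambda>k. Z k \<omega> \<bullet> C) (\<lambda>j. sg (X j \<omega>) (Z j \<omega>) * eps j \<omega>)\<bar>
                / (sqrt (real n) * sd p (tau M (Z 0) (\<lambda>\<omega>. sg (X 0 \<omega>) (Z 0 \<omega>) * eps 0 \<omega>) C))})
         \<longlonglongrightarrow> 0"
proof -
  obtain K where K: "\<forall>n C. C \<noteq> 0 \<longrightarrow> measure M {\<omega>\<in>space M.
           e \<le> \<bar>S_V p n (b n) (r n) (\<lambda>k. Z k \<omega> \<bullet> C) (\<lambda>j. sg (X j \<omega>) (Z j \<omega>) * eps j \<omega>)\<bar>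
                / (sqrt (real n) * sd p (tau M (Z 0) (\<lambda>\<omega>. sg (X 0 \<omega>) (Z 0 \<omega>) * eps 0 \<omega>) C))}
         \<le> K * (real (r n) / sqrt (real n))"
    using tail_prob_bound[OF dens \<open>p \<ge> 2\<close> sg_meas sg_bdd eps_sq \<open>e > 0\<close>] by blast
  have unit_nonzero: "C \<noteq> 0" if "C \<in> {C::real^'s. norm C = 1}" for C
    using that by auto
  show ?thesis
  proof (rule tendsto_SUP_0_if_dominated)
    show "{C::real^'s. norm C = 1} \<noteq> {}"
      using norm_axis_1[of undefined] by blast
    show "(\<lambda>n. K * (real (r n) / sqrt (real n))) \<longlonglongrightarrow> 0"
      using blocks by (rule tendsto_mult_right_zero)
  qed (erule unit_nonzero[THEN K[rule_format]] | simp)+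
qed

end

lemma r_over_sqrt_tendsto_0:
  fixes b r :: "nat \<Rightarrow> nat"
  assumes "(\<lambda>n. real (b n)) \<sim>[sequentially] (\<lambda>n. real n powr (2/3))"
    and "(\<lambda>n. real (r n)) \<sim>[sequentially] (\<lambda>n. real n / real (b n))"
  shows "(\<lambda>n. real (r n) / sqrt (real n)) \<longlonglongrightarrow> 0"
proof -
  have "(\<lambda>n. real (r n)) \<sim>[sequentially] (\<lambda>n. real n / real n powr (2/3))"
    using assms(2) by (rule asymp_equiv_trans) (intro asymp_equiv_intros assms(1))
  then have "(\<lambda>n. real (r n) / sqrt (real n)) \<sim>[sequentially] (\<lambda>n. real n / real n powr (2/3) / sqrt (real n))"
    by (intro asymp_equiv_intros)
  moreover have "(\<lambda>n. real n / real n powr (2/3) / sqrt (real n)) \<longlonglongrightarrow> 0"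
    by real_asymp
  ultimately show ?thesis
    using asymp_equiv_tendsto_transfer asymp_equiv_sym by blast
qed

theorem lemma2:
  fixes M :: "'a measure"
    and X :: "nat \<Rightarrow> 'a \<Rightarrow> real^'r" and Z :: "nat \<Rightarrow> 'a \<Rightarrow> real^'s"
    and eps :: "nat \<Rightarrow> 'a \<Rightarrow> real" and Y :: "nat \<Rightarrow> 'a \<Rightarrow> real"
    and m :: "real^'r \<Rightarrow> real^'s \<Rightarrow> real" and m1 :: "real^'r \<Rightarrow> real"
    and sigma :: "real^'r \<Rightarrow> real^'s \<Rightarrow> real"
    and fX :: "real^'r \<Rightarrow> ennreal" and fZ :: "real^'s \<Rightarrow> ennreal"
    and p q :: nat and b r :: "nat \<Rightarrow> nat" and lam :: "nat \<Rightarrow> 'r \<Rightarrow> real"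
  assumes M: "prob_space M"
    and measX: "\<forall>i. X i \<in> borel_measurable M"
    and measZ: "\<forall>i. Z i \<in> borel_measurable M"
    and measE: "\<forall>i. eps i \<in> borel_measurable M"
    and indep: "prob_space.indep_vars M (\<lambda>_. borel) (\<lambda>i \<omega>. (X i \<omega>, Z i \<omega>, eps i \<omega>)) UNIV"
    and ident: "\<forall>i. distr M borel (\<lambda>\<omega>. (X i \<omega>, Z i \<omega>, eps i \<omega>))
                    = distr M borel (\<lambda>\<omega>. (X 0 \<omega>, Z 0 \<omega>, eps 0 \<omega>))"
    and eps_indep: "distr M (borel \<Otimes>\<^sub>M borel) (\<lambda>\<omega>. ((X 0 \<omega>, Z 0 \<omega>), eps 0 \<omega>))
                       = distr M borel (\<lambda>\<omega>. (X 0 \<omega>, Z 0 \<omega>)) \<Otimes>\<^sub>M distr M borel (eps 0)"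
    and eps_int: "integrable M (eps 0)"
    and eps_mean: "prob_space.expectation M (eps 0) = 0"
    and eps_var: "integrable M (\<lambda>\<omega>. (eps 0 \<omega>)\<^sup>2)"
    and model: "\<forall>i \<omega>. Y i \<omega> = m (X i \<omega>) (Z i \<omega>) + sigma (X i \<omega>) (Z i \<omega>) * eps i \<omega>"
    and sigma_meas: "(\<lambda>(x, z). sigma x z) \<in> borel_measurable borel"
    and H0: "\<forall>x z. m x z = m1 x"
    and densX: "distributed M lborel (X 0) fX"
    and densX_pos: "\<exists>c>0. \<forall>x. fX x \<noteq> 0 \<longrightarrow> ennreal c \<le> fX x"
    and densZ: "distributed M lborel (Z 0) fZ"
    and densZ_pos: "\<exists>c>0. \<forall>z. fZ z \<noteq> 0 \<longrightarrow> ennreal c \<le> fZ z"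
    and smooth: "derivs_bdd_ucont (Suc q) m1"
    and lipschitz: "\<forall>C::real^'s. norm C = 1 \<longrightarrow>
          (\<exists>g L. L-lipschitz_on UNIV g \<and>
             (AE \<omega> in M. real_cond_exp M (vimage_algebra (space M) (\<lambda>\<omega>. Z 0 \<omega> \<bullet> C) borel)
                            (\<lambda>\<omega>. (Y 0 \<omega> - m1 (X 0 \<omega>))\<^sup>2) \<omega> = g (Z 0 \<omega> \<bullet> C)))"
    and sigma_bdd: "\<exists>B. \<forall>x z. (sigma x z)\<^sup>2 \<le> B"
    and eps_4: "integrable M (\<lambda>\<omega>. (eps 0 \<omega>) ^ 4)"
    and lam_pos: "\<forall>n i. lam n i > 0"
    and lam_0: "\<forall>i. (\<lambda>n. lam n i) \<longlonglongrightarrow> 0"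
    and lam_rate: "\<forall>i j. (\<lambda>n. lam n i) \<in> \<Theta>(\<lambda>n. lam n j)"
    and lam_1: "\<forall>i. (\<lambda>n. real n * lam n i ^ (4 * (q + 1))) \<longlonglongrightarrow> 0"
    and lam_2: "\<forall>i. filterlim (\<lambda>n. real n * lam n i ^ (2 * CARD('r)) / (ln (real n))\<^sup>2) at_top sequentially"
    and p_odd: "odd p" and p_ge: "p \<ge> 3"
    and b_rate: "(\<lambda>n. real (b n)) \<sim>[sequentially] (\<lambda>n. real n powr (2/3))"
    and r_rate: "(\<lambda>n. real (r n)) \<sim>[sequentially] (\<lambda>n. real n / real (b n))"
  shows "\<forall>e>0. (\<lambda>n. SUP C\<in>{C::real^'s. norm C = 1}.
            measure M {\<omega>\<in>space M.
              \<bar>S_V p n (b n) (r n) (\<lambda>j. Z j \<omega> \<bullet> C) (\<lambda>j. Y j \<omega> - m1 (X j \<omega>))\<bar>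
                / (sqrt (real n) * sd p (tau M (Z 0) (\<lambda>\<omega>. Y 0 \<omega> - m1 (X 0 \<omega>)) C)) \<ge> e})
          \<longlonglongrightarrow> 0"
proof -
  interpret iid_design_noise M X Z eps
    using measX measZ measE indep ident eps_indep
    by (intro iid_design_noise.intro[OF M] iid_design_noise_axioms.intro) blast+
  have residual: "Y j \<omega> - m1 (X j \<omega>) = sigma (X j \<omega>) (Z j \<omega>) * eps j \<omega>" for j \<omega>
    using model H0 by simp
  obtain B where sigma_B: "\<And>x z. (sigma x z)\<^sup>2 \<le> B" using sigma_bdd by blast
  have "p \<ge> 2" using p_ge by simp
  have "(\<lambda>n. real (r n) / sqrt (real n)) \<longlonglongrightarrow> 0"
    using b_rate r_rate by (rule r_over_sqrt_tendsto_0)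
  then show ?thesis
    unfolding residual
    using tendsto_SUP_tail_prob_0[OF densZ \<open>p \<ge> 2\<close> sigma_meas sigma_B eps_var] by blast
qed

end
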